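(* For every $n$, $\mathrm{ex}(n,M,K_3)=\mathcal N(M,T_2(n))$ and $\mathrm{ex}(n,M',K_3)=\mathcal N(M',T_2(n))$.
   Context: $M$ is the five-vertex graph consisting of two independent edges and an isolated vertex; $M'$ is the five-vertex graph consisting of a path $P_3$ on three vertices and a disjoint edge. $T_2(n)$ is the complete bipartite graph on $n$ vertices with parts of sizes $\lfloor n/2\rfloor$ and $\lceil n/2\rceil$. $\mathcal N(H,G)$ is the number of subgraphs of $G$ isomorphic to $H$; $\mathrm{ex}(n,H,K_3)$ is the maximum of $\mathcal N(H,G)$ over triangle-free $n$-vertex graphs $G$. *)

theory Defs
  imports Main
begin

text \<open>A (finite simple) graph is a pair (V, E) of a vertex set and a set of
  2-element subsets of V (the edges).\<close>
type_synonym 'a graph = "'a set \<times> 'a set set"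

definition simple_graph :: "'a graph \<Rightarrow> bool" where
  "simple_graph G \<longleftrightarrow> finite (fst G) \<and> (\<forall>e\<in>snd G. card e = 2 \<and> e \<subseteq> fst G)"

definition triangle_free :: "'a graph \<Rightarrow> bool" where
  "triangle_free G \<longleftrightarrow>
     \<not> (\<exists>a b c. {a, b} \<in> snd G \<and> {b, c} \<in> snd G \<and> {a, c} \<in> snd G
              \<and> a \<noteq> b \<and> b \<noteq> c \<and> a \<noteq> c)"

definition graph_iso :: "'b graph \<Rightarrow> 'a graph \<Rightarrow> bool" where
  "graph_iso H G \<longleftrightarrow>
     (\<exists>f. bij_betw f (fst H) (fst G) \<and> snd G = (\<lambda>e. f ` e) ` snd H)"

definition count_copies :: "'b graph \<Rightarrow> 'a graph \<Rightarrow> nat" where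
  "count_copies H G = card {(V', E'). V' \<subseteq> fst G \<and> E' \<subseteq> snd G \<and> (\<forall>e\<in>E'. e \<subseteq> V')
                                    \<and> graph_iso H (V', E')}"

definition ex_tf :: "nat \<Rightarrow> 'b graph \<Rightarrow> nat" where
  "ex_tf n H = Max {count_copies H G | G :: nat graph.
                      simple_graph G \<and> fst G = {0..<n} \<and> triangle_free G}"

definition T2 :: "nat \<Rightarrow> nat graph" where
  "T2 n = ({0..<n}, {{a, b} | a b. a < n div 2 \<and> n div 2 \<le> b \<and> b < n})"

definition graph_M :: "nat graph" where
  "graph_M = ({0..<5}, {{0, 1}, {2, 3}})"

definition graph_M' :: "nat graph" where
  "graph_M' = ({0..<5}, {{0, 1}, {1, 2}, {3, 4}})"

end

theory Submission
  imports Defs "HOL-Analysis.Convex"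
begin

text \<open>
  In a graph with e edges and degrees d(v), the ordered pairs of disjoint edges number
  e^2 + e - \<Sum>v. d(v)^2, and each copy of M is obtained from exactly two such pairs together with
  one of the remaining n - 4 vertices. For a triangle-free graph on n vertices the degree sum
  of the two ends of an edge is at most n, which gives Mantel's bound e \<le> \<lfloor>n/2\<rfloor>\<lceil>n/2\<rceil>;
  with Cauchy-Schwarz 4e^2 \<le> n \<Sum>v. d(v)^2 and \<Sum>v. (d(v) - a)(d(v) - a - 1) \<ge> 0 for the
  integer a = \<lfloor>n/2\<rfloor> this forces e^2 + e - \<Sum>v. d(v)^2 to be at most its value for T_2(n).

  Every copy of M' contains exactly two copies of M on the same vertex set, while a copy of M
  with isolated vertex z lies in as many copies of M' as z has neighbours among the other four
  vertices: at most one per edge when there is no triangle, exactly one per edge in T_2(n).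
  Double counting gives N(M') \<le> N(M) with equality for T_2(n).
\<close>

section \<open>Degrees and disjoint edge pairs\<close>

locale finite_simple_graph =
  fixes V :: "'a set" and E :: "'a set set"
  assumes finite_vertices: "finite V"
    and card_edge: "x \<in> E \<Longrightarrow> card x = 2"
    and edge_subset: "x \<in> E \<Longrightarrow> x \<subseteq> V"

lemma simple_graph_iff_finite_simple_graph:
  "simple_graph G \<longleftrightarrow> finite_simple_graph (fst G) (snd G)"
  unfolding simple_graph_def finite_simple_graph_def by blast

definition degree :: "'a set set \<Rightarrow> 'a \<Rightarrow> nat" where
  "degree E v = card {x \<in> E. v \<in> x}"

definition neighbours :: "'a set set \<Rightarrow> 'a \<Rightarrow> 'a set" where
  "neighbours E u = {v. {u, v} \<in> E}"

definition disjoint_edge_pairs :: "'a set set \<Rightarrow> ('a set \<times> 'a set) set" where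
  "disjoint_edge_pairs E = {(x, y) \<in> E \<times> E. x \<inter> y = {}}"

lemma of_bool_disjoint_card_2:
  assumes "card x = 2" "card y = 2"
  shows "of_bool (x \<inter> y = {}) = 1 - int (card (x \<inter> y)) + of_bool (x = y)"
proof -
  have fin: "finite x" "finite y" using assms by (auto intro: card_ge_0_finite)
  have "card (x \<inter> y) \<le> 2" using card_mono[OF fin(1), of "x \<inter> y"] assms by simp
  then consider "card (x \<inter> y) = 0" | "card (x \<inter> y) = 1" | "card (x \<inter> y) = 2" by linarith
  then show ?thesis
  proof cases
    case 3
    then have "x = y"
      using card_subset_eq[OF fin(1), of "x \<inter> y"] card_subset_eq[OF fin(2), of "x \<inter> y"] assms
      by auto
    with 3 assms(2) show ?thesis by (cases "y = {}") auto
  qed (use fin assms in auto)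
qed

context finite_simple_graph
begin

lemma finite_edges: "finite E"
  using finite_subset[of E "Pow V"] edge_subset finite_vertices by blast

lemma obtain_edge:
  assumes "x \<in> E"
  obtains a b where "x = {a, b}" "a \<noteq> b"
  using card_edge[OF assms] by (auto simp: card_2_iff)

lemma vertices_in_edge: "x \<in> E \<Longrightarrow> {v \<in> V. v \<in> x} = x"
  using edge_subset by blast

lemma neighbours_subset: "neighbours E u \<subseteq> V"
  using edge_subset by (auto simp: neighbours_def)

lemma degree_eq_card_neighbours: "degree E u = card (neighbours E u)"
proof -
  have "{x \<in> E. u \<in> x} = (\<lambda>v. {u, v}) ` neighbours E u"
  proof (intro equalityI subsetI)
    fix x assume "x \<in> {x \<in> E. u \<in> x}"
    then obtain a b where "x \<in> E" "x = {a, b}" "u \<in> x" using obtain_edge by blast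
    then show "x \<in> (\<lambda>v. {u, v}) ` neighbours E u"
      by (auto simp: neighbours_def insert_commute)
  qed (auto simp: neighbours_def)
  moreover have "inj_on (\<lambda>v. {u, v}) (neighbours E u)"
    by (auto simp: inj_on_def doubleton_eq_iff)
  ultimately show ?thesis unfolding degree_def by (simp add: card_image)
qed

lemma sum_degree_eq_twice_card_edges: "(\<Sum>v\<in>V. degree E v) = 2 * card E"
  unfolding degree_def
  by (rule sum_multicount[OF finite_vertices finite_edges]) (simp add: vertices_in_edge card_edge)

lemma sum_degree_squared_eq_sum_over_edges:
  "(\<Sum>v\<in>V. (degree E v)\<^sup>2) = (\<Sum>x\<in>E. \<Sum>v\<in>x. degree E v)"
proof -
  have "(\<Sum>v\<in>V. (degree E v)\<^sup>2) = (\<Sum>v\<in>V. \<Sum>x\<in>{x\<in>E. v\<in>x}. degree E v)"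
    by (simp add: degree_def power2_eq_square)
  also have "\<dots> = (\<Sum>x\<in>E. \<Sum>v\<in>{v\<in>V. v\<in>x}. degree E v)"
    by (rule sum.swap_restrict[OF finite_vertices finite_edges])
  finally show ?thesis by (simp add: vertices_in_edge)
qed

lemma sum_degree_squared_eq_sum_card_Int:
  "(\<Sum>v\<in>V. (degree E v)\<^sup>2) = (\<Sum>(x, y)\<in>E \<times> E. card (x \<inter> y))"
proof -
  have "(\<Sum>v\<in>V. (degree E v)\<^sup>2) = (\<Sum>v\<in>V. card {p\<in>E \<times> E. v \<in> fst p \<inter> snd p})"
  proof (rule sum.cong)
    fix v
    have "{p\<in>E \<times> E. v \<in> fst p \<inter> snd p} = {x\<in>E. v\<in>x} \<times> {x\<in>E. v\<in>x}" by auto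
    then show "(degree E v)\<^sup>2 = card {p\<in>E \<times> E. v \<in> fst p \<inter> snd p}"
      by (simp add: degree_def card_cartesian_product power2_eq_square)
  qed simp
  also have "\<dots> = (\<Sum>p\<in>E \<times> E. card {v\<in>V. v \<in> fst p \<inter> snd p})"
    unfolding card_eq_sum using finite_vertices finite_edges by (intro sum.swap_restrict) auto
  also have "\<dots> = (\<Sum>(x, y)\<in>E \<times> E. card (x \<inter> y))"
    using edge_subset by (intro sum.cong) (auto intro!: arg_cong[where f = card])
  finally show ?thesis .
qed

lemma finite_disjoint_edge_pairs: "finite (disjoint_edge_pairs E)"
  by (rule finite_subset[of _ "E \<times> E"]) (auto simp: disjoint_edge_pairs_def finite_edges)

lemma card_disjoint_edge_pairs:
  "int (card (disjoint_edge_pairs E)) = (int (card E))\<^sup>2 + int (card E) - (\<Sum>v\<in>V. (int (degree E v))\<^sup>2)"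
proof -
  have "int (card (disjoint_edge_pairs E)) = (\<Sum>(x, y)\<in>E \<times> E. of_bool (x \<inter> y = {}))"
  proof -
    have "disjoint_edge_pairs E = (E \<times> E) \<inter> {(x, y). x \<inter> y = {}}"
      by (auto simp: disjoint_edge_pairs_def)
    then show ?thesis using finite_edges by (simp add: case_prod_unfold)
  qed
  also have "\<dots> = (\<Sum>(x, y)\<in>E \<times> E. 1 - int (card (x \<inter> y)) + of_bool (x = y))"
    by (intro sum.cong) (auto simp: of_bool_disjoint_card_2 card_edge)
  also have "\<dots> = (int (card E))\<^sup>2 - (\<Sum>(x, y)\<in>E \<times> E. int (card (x \<inter> y))) + int (card E)"
  proof -
    have "(E \<times> E) \<inter> {p. fst p = snd p} = (\<lambda>x. (x, x)) ` E" by auto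
    then have "card ((E \<times> E) \<inter> {p. fst p = snd p}) = card E" by (simp add: card_image inj_on_def)
    then show ?thesis using finite_edges
    by (simp add: sum.distrib sum_subtractf case_prod_unfold card_cartesian_product power2_eq_square
        sum.cartesian_product[symmetric])
  qed
  also have "(\<Sum>(x, y)\<in>E \<times> E. int (card (x \<inter> y))) = (\<Sum>v\<in>V. (int (degree E v))\<^sup>2)"
    using arg_cong[OF sum_degree_squared_eq_sum_card_Int, of int] by (simp add: case_prod_unfold)
  finally show ?thesis by linarith
qed

lemma four_card_edges_squared_le: "4 * (card E)\<^sup>2 \<le> card V * (\<Sum>v\<in>V. (degree E v)\<^sup>2)"
proof -
  have "(\<Sum>v\<in>V. real (degree E v))\<^sup>2 \<le> (\<Sum>v\<in>V. (real (degree E v))\<^sup>2) * card V"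
    by (rule sum_squared_le_sum_of_squares)
  then have "real ((\<Sum>v\<in>V. degree E v)\<^sup>2) \<le> real (card V * (\<Sum>v\<in>V. (degree E v)\<^sup>2))"
    by (simp add: mult.commute)
  then show ?thesis by (simp only: of_nat_le_iff sum_degree_eq_twice_card_edges power_mult_distrib) simp
qed

lemma sum_degree_squared_ge:
  fixes a :: int
  shows "(2*a + 1) * (2 * int (card E)) - int (card V) * a * (a + 1) \<le> (\<Sum>v\<in>V. (int (degree E v))\<^sup>2)"
proof -
  have "0 \<le> (\<Sum>v\<in>V. (int (degree E v) - a) * (int (degree E v) - a - 1))"
    by (intro sum_nonneg) (simp add: zero_le_mult_iff, linarith)
  also have "\<dots> = (\<Sum>v\<in>V. (int (degree E v))\<^sup>2) - (2*a + 1) * (\<Sum>v\<in>V. int (degree E v))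
      + int (card V) * a * (a + 1)"
    by (simp add: algebra_simps power2_eq_square sum.distrib sum_subtractf sum_distrib_left)
  also have "(\<Sum>v\<in>V. int (degree E v)) = 2 * int (card E)"
    using arg_cong[OF sum_degree_eq_twice_card_edges, of int] by simp
  finally show ?thesis by simp
qed

end

section \<open>Triangle-free graphs\<close>

locale triangle_free_graph = finite_simple_graph +
  assumes no_triangle: "{a, b} \<in> E \<Longrightarrow> {b, c} \<in> E \<Longrightarrow> {a, c} \<in> E \<Longrightarrow> False"

lemma triangle_free_graph_iff:
  "triangle_free_graph (fst G) (snd G) \<longleftrightarrow> simple_graph G \<and> triangle_free G"
proof -
  have "finite_simple_graph (fst G) (snd G) \<Longrightarrow> {a, b} \<in> snd G \<Longrightarrow> a \<noteq> b" for a b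
    using finite_simple_graph.card_edge by fastforce
  then show ?thesis
    unfolding triangle_free_graph_def triangle_free_graph_axioms_def triangle_free_def
      simple_graph_iff_finite_simple_graph by metis
qed

context triangle_free_graph
begin

lemma degree_edge_le:
  assumes "{u, w} \<in> E"
  shows "degree E u + degree E w \<le> card V"
proof -
  have "neighbours E u \<inter> neighbours E w = {}"
    using no_triangle assms by (auto simp: neighbours_def insert_commute)
  then have "card (neighbours E u) + card (neighbours E w) = card (neighbours E u \<union> neighbours E w)"
    using neighbours_subset finite_vertices by (metis card_Un_disjoint finite_subset)
  also have "\<dots> \<le> card V"
    using neighbours_subset finite_vertices by (intro card_mono) auto
  finally show ?thesis by (simp add: degree_eq_card_neighbours)
qed

lemma sum_degree_squared_le: "(\<Sum>v\<in>V. (degree E v)\<^sup>2) \<le> card V * card E"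
proof -
  have "(\<Sum>v\<in>V. (degree E v)\<^sup>2) = (\<Sum>x\<in>E. \<Sum>v\<in>x. degree E v)"
    by (rule sum_degree_squared_eq_sum_over_edges)
  also have "\<dots> \<le> (\<Sum>x\<in>E. card V)"
  proof (rule sum_mono)
    fix x assume "x \<in> E"
    then obtain u w where "x = {u, w}" "u \<noteq> w" using obtain_edge by blast
    then show "(\<Sum>v\<in>x. degree E v) \<le> card V" using degree_edge_le \<open>x \<in> E\<close> by simp
  qed
  finally show ?thesis by (simp add: mult.commute)
qed

theorem mantel: "card E \<le> card V div 2 * (card V - card V div 2)"
proof (cases "card E = 0")
  case False
  have "card E * (4 * card E) = 4 * (card E)\<^sup>2" by (simp add: power2_eq_square)
  also have "\<dots> \<le> card V * (card V * card E)"
    using four_card_edges_squared_le sum_degree_squared_le by (meson mult_le_mono2 order_trans)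
  also have "\<dots> = card E * (card V)\<^sup>2" by (simp add: power2_eq_square)
  finally have "4 * card E \<le> (card V)\<^sup>2" using False by simp
  moreover have "(card V)\<^sup>2 \<le> 4 * (card V div 2 * (card V - card V div 2)) + 1"
    by (cases "even (card V)") (auto elim!: evenE oddE simp: power2_eq_square algebra_simps)
  ultimately show ?thesis by linarith
qed simp

lemma card_neighbours_Int_edge_le:
  assumes "{u, v} \<in> E"
  shows "card (neighbours E z \<inter> {u, v}) \<le> 1"
proof -
  have "\<not> (u \<in> neighbours E z \<and> v \<in> neighbours E z)"
    using no_triangle[of z u v] assms by (auto simp: neighbours_def)
  then have "neighbours E z \<inter> {u, v} \<subseteq> {u} \<or> neighbours E z \<inter> {u, v} \<subseteq> {v}" by auto
  then show ?thesis by (auto simp: card_le_Suc0_iff_eq)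
qed

end

section \<open>The balanced complete bipartite graph\<close>

lemma balanced_product_ineq:
  fixes h N :: int
  assumes parity: "N = 2*h \<or> N = 2*h + 1" and "4 \<le> N"
  defines "P \<equiv> h*(N - h)"
  shows "(N - 4)*(P - 1)\<^sup>2 + N*(P - 1) \<le> N*(P\<^sup>2 + P - P*N)"
proof -
  have "0 \<le> P" using parity \<open>4 \<le> N\<close> by (auto simp: P_def)
  have "N*(P\<^sup>2 + P - P*N) - ((N - 4)*(P - 1)\<^sup>2 + N*(P - 1)) = P*(4*P - N\<^sup>2) + P*(2*N - 8) + 4"
    by (simp add: algebra_simps power2_eq_square)
  moreover have "0 \<le> P*(4*P - N\<^sup>2) + P*(2*N - 8) + 4"
    using parity
  proof
    assume "N = 2*h"
    then have "N\<^sup>2 = 4*P" by (simp add: P_def algebra_simps power2_eq_square)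
    then show ?thesis using \<open>0 \<le> P\<close> \<open>4 \<le> N\<close> by simp
  next
    assume "N = 2*h + 1"
    then have "N\<^sup>2 = 4*P + 1" "5 \<le> N"
      using \<open>4 \<le> N\<close> by (auto simp: P_def algebra_simps power2_eq_square)
    moreover from this have "0 \<le> P*(2*N - 9)" using \<open>0 \<le> P\<close> by simp
    ultimately show ?thesis by (simp add: algebra_simps)
  qed
  ultimately show ?thesis by simp
qed

text \<open>
  Here e counts edges, S is the sum of the squared degrees and h = \<lfloor>N/2\<rfloor>. When e reaches
  Mantel's bound h(N - h) the last hypothesis with a = h is exactly what is needed; below it
  Cauchy-Schwarz suffices for N \<ge> 4, and a = 0 covers N \<le> 3.
\<close>

lemma disjoint_pairs_bound_arith:
  fixes e S h N :: int
  assumes parity: "N = 2*h \<or> N = 2*h + 1" and "0 \<le> h" and "0 \<le> e"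
    and mantel: "e \<le> h*(N - h)" and cauchy: "4*e\<^sup>2 \<le> N*S"
    and degree_bound: "\<And>a. (2*a + 1)*(2*e) - N*a*(a + 1) \<le> S"
  shows "e\<^sup>2 + e - S \<le> (h*(N - h))\<^sup>2 + h*(N - h) - h*(N - h)*N"
proof -
  define P where "P = h*(N - h)"
  have "e\<^sup>2 + e - S \<le> P\<^sup>2 + P - P*N"
  proof (cases "e = P")
    case True
    have "(2*h + 1)*(2*P) - N*h*(h + 1) = P*N"
      using parity by (auto simp: P_def algebra_simps)
    then show ?thesis using degree_bound[of h] True by (simp add: power2_eq_square)
  next
    case False
    with mantel have e_le: "e \<le> P - 1" by (simp add: P_def)
    consider "N \<le> 3" | "4 \<le> N" by linarith
    then show ?thesis
    proof cases
      case 1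
      with parity \<open>0 \<le> h\<close> have "(h = 0 \<and> N \<le> 1) \<or> (h = 1 \<and> (N = 2 \<or> N = 3))" by auto
      then have "P\<^sup>2 + P - P*N = 0" "P \<le> 2" by (auto simp: P_def power2_eq_square)
      moreover have "e\<^sup>2 = e" using e_le \<open>P \<le> 2\<close> \<open>0 \<le> e\<close>
        by (cases "e = 0") (auto simp: power2_eq_square)
      moreover have "2*e \<le> S" using degree_bound[of 0] by simp
      ultimately show ?thesis by simp
    next
      case 2
      have "N*(e\<^sup>2 + e - S) \<le> (N - 4)*e\<^sup>2 + N*e"
        using cauchy by (simp add: algebra_simps)
      also have "\<dots> \<le> (N - 4)*(P - 1)\<^sup>2 + N*(P - 1)"
      proof -
        have "e\<^sup>2 \<le> (P - 1)\<^sup>2" using e_le \<open>0 \<le> e\<close> by (simp add: power_mono)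
        then show ?thesis using e_le 2 by (intro add_mono mult_left_mono) auto
      qed
      also have "\<dots> \<le> N*(P\<^sup>2 + P - P*N)"
        unfolding P_def using parity 2 by (rule balanced_product_ineq)
      finally show ?thesis using 2 by (simp add: mult_le_cancel_left)
    qed
  qed
  then show ?thesis unfolding P_def .
qed

lemma T2_eq: "T2 n = ({0..<n}, snd (T2 n))"
  by (simp add: T2_def)

lemma T2_edge_iff:
  "{u, v} \<in> snd (T2 n) \<longleftrightarrow> u < n \<and> v < n \<and> (u < n div 2 \<longleftrightarrow> n div 2 \<le> v)"
proof
  assume "{u, v} \<in> snd (T2 n)"
  then obtain a b where "{u, v} = {a, b}" "a < n div 2" "n div 2 \<le> b" "b < n"
    unfolding T2_def by auto
  then show "u < n \<and> v < n \<and> (u < n div 2 \<longleftrightarrow> n div 2 \<le> v)"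
    by (auto simp: doubleton_eq_iff)
next
  assume "u < n \<and> v < n \<and> (u < n div 2 \<longleftrightarrow> n div 2 \<le> v)"
  then have "(u < n div 2 \<and> n div 2 \<le> v \<and> v < n) \<or> (v < n div 2 \<and> n div 2 \<le> u \<and> u < n)"
    by auto
  then show "{u, v} \<in> snd (T2 n)"
    unfolding T2_def by (auto simp: insert_commute)
qed

lemma triangle_free_graph_T2: "triangle_free_graph {0..<n} (snd (T2 n))"
proof
  fix x assume "x \<in> snd (T2 n)"
  then obtain a b where "x = {a, b}" "a < n div 2" "n div 2 \<le> b" "b < n"
    unfolding T2_def by auto
  then show "card x = 2" "x \<subseteq> {0..<n}" by auto
next
  fix a b c assume "{a, b} \<in> snd (T2 n)" "{b, c} \<in> snd (T2 n)" "{a, c} \<in> snd (T2 n)"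
  then show False unfolding T2_edge_iff by auto
qed simp

lemma degree_T2:
  assumes "v < n"
  shows "degree (snd (T2 n)) v = (if v < n div 2 then n - n div 2 else n div 2)"
proof -
  interpret triangle_free_graph "{0..<n}" "snd (T2 n)" by (rule triangle_free_graph_T2)
  have "neighbours (snd (T2 n)) v = (if v < n div 2 then {n div 2..<n} else {0..<n div 2})"
    using assms by (auto simp: neighbours_def T2_edge_iff)
  then show ?thesis by (simp add: degree_eq_card_neighbours)
qed

lemma card_neighbours_Int_T2_edge:
  assumes "{u, v} \<in> snd (T2 n)" "z < n"
  shows "card (neighbours (snd (T2 n)) z \<inter> {u, v}) = 1"
proof -
  have "neighbours (snd (T2 n)) z \<inter> {u, v} = (if z < n div 2 \<longleftrightarrow> u < n div 2 then {v} else {u})"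
    using assms by (auto simp: neighbours_def T2_edge_iff)
  then show ?thesis by simp
qed

lemma card_disjoint_edge_pairs_T2:
  fixes n :: nat
  defines "h \<equiv> n div 2" and "m \<equiv> n - n div 2"
  shows "int (card (disjoint_edge_pairs (snd (T2 n)))) = (int (h*m))\<^sup>2 + int (h*m) - int (h*m*n)"
proof -
  interpret triangle_free_graph "{0..<n}" "snd (T2 n)" by (rule triangle_free_graph_T2)
  have n_eq: "n = h + m" unfolding h_def m_def by simp
  have sum_by_parts: "(\<Sum>v\<in>{0..<n}. f (degree (snd (T2 n)) v)) = of_nat h * f m + of_nat m * f h"
    for f :: "nat \<Rightarrow> 'b::comm_semiring_1"
  proof -
    have "{0..<n} = {0..<h} \<union> {h..<n}" "{0..<h} \<inter> {h..<n} = {}" using n_eq by auto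
    then have "(\<Sum>v\<in>{0..<n}. f (degree (snd (T2 n)) v))
        = (\<Sum>v\<in>{0..<h}. f (degree (snd (T2 n)) v)) + (\<Sum>v\<in>{h..<n}. f (degree (snd (T2 n)) v))"
      by (simp add: sum.union_disjoint)
    also have "\<dots> = of_nat h * f m + of_nat m * f h"
      using n_eq by (simp add: degree_T2 h_def m_def)
    finally show ?thesis .
  qed
  have "2 * card (snd (T2 n)) = 2 * (h * m)"
    using sum_degree_eq_twice_card_edges sum_by_parts[of id] by simp
  moreover have "(\<Sum>v\<in>{0..<n}. (int (degree (snd (T2 n)) v))\<^sup>2) = int (h*m*n)"
    using sum_by_parts[of "\<lambda>d. (int d)\<^sup>2"] n_eq by (simp add: algebra_simps power2_eq_square)
  ultimately show ?thesis using card_disjoint_edge_pairs by simp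
qed

theorem (in triangle_free_graph) card_disjoint_edge_pairs_le_T2:
  "card (disjoint_edge_pairs E) \<le> card (disjoint_edge_pairs (snd (T2 (card V))))"
proof -
  define n h where "n = card V" and "h = card V div 2"
  have "int (card (disjoint_edge_pairs E))
      = (int (card E))\<^sup>2 + int (card E) - (\<Sum>v\<in>V. (int (degree E v))\<^sup>2)"
    by (rule card_disjoint_edge_pairs)
  also have "\<dots> \<le> (int h * (int n - int h))\<^sup>2 + int h * (int n - int h) - int h * (int n - int h) * int n"
  proof (rule disjoint_pairs_bound_arith)
    show "int n = 2 * int h \<or> int n = 2 * int h + 1" unfolding n_def h_def by presburger
    show "int (card E) \<le> int h * (int n - int h)"
      using mantel unfolding n_def h_def by (metis of_nat_le_iff of_nat_mult of_nat_diff div_le_dividend)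
    show "4 * (int (card E))\<^sup>2 \<le> int n * (\<Sum>v\<in>V. (int (degree E v))\<^sup>2)"
      using four_card_edges_squared_le unfolding n_def by (simp flip: of_nat_power of_nat_mult of_nat_sum)
  qed (use sum_degree_squared_ge n_def in simp_all)
  also have "\<dots> = int (card (disjoint_edge_pairs (snd (T2 n))))"
    using card_disjoint_edge_pairs_T2[of n] unfolding h_def n_def by (simp add: of_nat_diff)
  finally show ?thesis unfolding n_def by simp
qed

section \<open>Copies of M and M'\<close>

definition copies :: "'b graph \<Rightarrow> 'a graph \<Rightarrow> 'a graph set" where
  "copies H G =
    {(V', E'). V' \<subseteq> fst G \<and> E' \<subseteq> snd G \<and> (\<forall>e\<in>E'. e \<subseteq> V') \<and> graph_iso H (V', E')}"

lemma count_copies_eq_card: "count_copies H G = card (copies H G)"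
  unfolding count_copies_def copies_def ..

lemma graph_iso_interval_iff:
  assumes "\<forall>e\<in>F. e \<subseteq> {0..<k}"
  shows "graph_iso ({0..<k}, F) (V', E') \<longleftrightarrow>
    (\<exists>xs. length xs = k \<and> distinct xs \<and> V' = set xs \<and> E' = (\<lambda>e. (!) xs ` e) ` F)"
proof
  assume "graph_iso ({0..<k}, F) (V', E')"
  then obtain f where f: "bij_betw f {0..<k} V'" "E' = (\<lambda>e. f ` e) ` F"
    unfolding graph_iso_def by auto
  define xs where "xs = map f [0..<k]"
  have "(!) xs ` e = f ` e" if "e \<in> F" for e
    using assms that by (force simp: xs_def)
  then have "E' = (\<lambda>e. (!) xs ` e) ` F" using f(2) by (auto intro: image_cong)
  moreover have "length xs = k" "distinct xs" "V' = set xs"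
    using f(1) by (auto simp: xs_def bij_betw_def distinct_map)
  ultimately show "\<exists>xs. length xs = k \<and> distinct xs \<and> V' = set xs \<and> E' = (\<lambda>e. (!) xs ` e) ` F"
    by blast
next
  assume "\<exists>xs. length xs = k \<and> distinct xs \<and> V' = set xs \<and> E' = (\<lambda>e. (!) xs ` e) ` F"
  then obtain xs where "length xs = k" "distinct xs" "V' = set xs" "E' = (\<lambda>e. (!) xs ` e) ` F"
    by blast
  moreover from this have "bij_betw ((!) xs) {0..<k} V'"
    by (intro bij_betw_nth) auto
  ultimately show "graph_iso ({0..<k}, F) (V', E')" unfolding graph_iso_def by auto
qed

lemma ex_list_length_5: "(\<exists>xs. length xs = 5 \<and> P xs) \<longleftrightarrow> (\<exists>a b c d z. P [a, b, c, d, z])"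
proof
  assume "\<exists>xs. length xs = 5 \<and> P xs"
  then obtain xs where "length xs = 5" "P xs" by blast
  then show "\<exists>a b c d z. P [a, b, c, d, z]" by (auto simp: numeral_eq_Suc length_Suc_conv) blast
next
  assume "\<exists>a b c d z. P [a, b, c, d, z]"
  then obtain a b c d z where "P [a, b, c, d, z]" by blast
  then show "\<exists>xs. length xs = 5 \<and> P xs" by (intro exI[of _ "[a, b, c, d, z]"]) simp
qed

lemma graph_iso_M_iff:
  "graph_iso graph_M (V', E') \<longleftrightarrow>
    (\<exists>a b c d z. distinct [a, b, c, d, z] \<and> V' = {a, b, c, d, z} \<and> E' = {{a, b}, {c, d}})"
proof -
  have small: "\<forall>e\<in>{{0, 1}, {2, 3}}. e \<subseteq> {0..<5::nat}" by auto
  show ?thesis unfolding graph_M_def graph_iso_interval_iff[OF small] ex_list_length_5 by simp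
qed

lemma graph_iso_M'_iff:
  "graph_iso graph_M' (V', E') \<longleftrightarrow>
    (\<exists>a b c d z. distinct [a, b, c, d, z] \<and> V' = {a, b, c, d, z} \<and> E' = {{a, b}, {b, c}, {d, z}})"
proof -
  have small: "\<forall>e\<in>{{0, 1}, {1, 2}, {3, 4}}. e \<subseteq> {0..<5::nat}" by auto
  show ?thesis unfolding graph_M'_def graph_iso_interval_iff[OF small] ex_list_length_5 by simp
qed

definition ordered_M_copies :: "'a set \<Rightarrow> 'a set set \<Rightarrow> (('a set \<times> 'a set) \<times> 'a) set" where
  "ordered_M_copies V E = (SIGMA (x, y):disjoint_edge_pairs E. V - (x \<union> y))"

fun M_of_triple :: "('a set \<times> 'a set) \<times> 'a \<Rightarrow> 'a graph" where
  "M_of_triple ((x, y), z) = (insert z (x \<union> y), {x, y})"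

definition spanning_subgraph :: "'a graph \<Rightarrow> 'a graph \<Rightarrow> bool" where
  "spanning_subgraph H G \<longleftrightarrow> fst H = fst G \<and> snd H \<subseteq> snd G"

lemma disjoint_pair_in_three:
  assumes "X \<in> {A, B, C}" "Y \<in> {A, B, C}" "X \<inter> Y = {}" "X \<noteq> {}" "A \<inter> B \<noteq> {}"
  shows "{X, Y} = {A, C} \<or> {X, Y} = {B, C}"
  using assms by (auto simp: insert_commute Int_commute)

context finite_simple_graph
begin

lemma finite_copies: "finite (copies H (V, E))"
proof (rule finite_subset)
  show "copies H (V, E) \<subseteq> Pow V \<times> Pow E" by (auto simp: copies_def)
qed (use finite_vertices finite_edges in simp)

lemma mem_copies_M_iff:
  "(V', E') \<in> copies graph_M (V, E) \<longleftrightarrow>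
    (\<exists>a b c d z. distinct [a, b, c, d, z] \<and> V' = {a, b, c, d, z} \<and> E' = {{a, b}, {c, d}}
       \<and> {a, b} \<in> E \<and> {c, d} \<in> E \<and> z \<in> V)"
  (is "?lhs \<longleftrightarrow> ?rhs")
proof
  assume ?lhs
  then obtain a b c d z where "distinct [a, b, c, d, z]" "V' = {a, b, c, d, z}" "E' = {{a, b}, {c, d}}"
    "V' \<subseteq> V" "E' \<subseteq> E"
    by (auto simp: copies_def graph_iso_M_iff)
  then show ?rhs by blast
next
  assume ?rhs
  then obtain a b c d z where "distinct [a, b, c, d, z]" "V' = {a, b, c, d, z}" "E' = {{a, b}, {c, d}}"
    "{a, b} \<in> E" "{c, d} \<in> E" "z \<in> V"
    by blast
  moreover from this have "graph_iso graph_M (V', E')" unfolding graph_iso_M_iff by blast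
  ultimately show ?lhs
    using edge_subset by (auto simp: copies_def)
qed

lemma mem_copies_M'_iff:
  "(V', E') \<in> copies graph_M' (V, E) \<longleftrightarrow>
    (\<exists>a b c d z. distinct [a, b, c, d, z] \<and> V' = {a, b, c, d, z} \<and> E' = {{a, b}, {b, c}, {d, z}}
       \<and> {a, b} \<in> E \<and> {b, c} \<in> E \<and> {d, z} \<in> E)"
  (is "?lhs \<longleftrightarrow> ?rhs")
proof
  assume ?lhs
  then obtain a b c d z where "distinct [a, b, c, d, z]" "V' = {a, b, c, d, z}" "E' = {{a, b}, {b, c}, {d, z}}"
    "V' \<subseteq> V" "E' \<subseteq> E"
    by (auto simp: copies_def graph_iso_M'_iff)
  then show ?rhs by blast
next
  assume ?rhs
  then obtain a b c d z where "distinct [a, b, c, d, z]" "V' = {a, b, c, d, z}" "E' = {{a, b}, {b, c}, {d, z}}"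
    "{a, b} \<in> E" "{b, c} \<in> E" "{d, z} \<in> E"
    by blast
  moreover from this have "graph_iso graph_M' (V', E')" unfolding graph_iso_M'_iff by blast
  ultimately show ?lhs
    using edge_subset by (auto simp: copies_def)
qed

lemma finite_ordered_M_copies: "finite (ordered_M_copies V E)"
  unfolding ordered_M_copies_def
  using finite_disjoint_edge_pairs finite_vertices by (intro finite_SigmaI) (auto simp: case_prod_unfold)

lemma card_ordered_M_copies:
  "card (ordered_M_copies V E) = card (disjoint_edge_pairs E) * (card V - 4)"
proof -
  have "card (V - (x \<union> y)) = card V - 4" if "(x, y) \<in> disjoint_edge_pairs E" for x y
  proof -
    from that have "x \<in> E" "y \<in> E" "x \<inter> y = {}" by (auto simp: disjoint_edge_pairs_def)
    moreover have "finite x" "finite y" using finite_vertices edge_subset \<open>x \<in> E\<close> \<open>y \<in> E\<close>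
      by (auto intro: finite_subset)
    ultimately have "card (x \<union> y) = 4" "x \<union> y \<subseteq> V"
      using card_edge edge_subset by (auto simp: card_Un_disjoint)
    then show ?thesis using finite_vertices card_Diff_subset[of "x \<union> y" V] finite_subset by metis
  qed
  then show ?thesis
    using finite_vertices finite_disjoint_edge_pairs by (simp add: ordered_M_copies_def card_SigmaI case_prod_unfold)
qed

lemma M_of_triple_mem_copies:
  assumes "t \<in> ordered_M_copies V E"
  shows "M_of_triple t \<in> copies graph_M (V, E)"
proof -
  obtain x y z where t: "t = ((x, y), z)" "x \<in> E" "y \<in> E" "x \<inter> y = {}" "z \<in> V" "z \<notin> x \<union> y"
    using assms by (auto simp: ordered_M_copies_def disjoint_edge_pairs_def)
  obtain a b c d where "x = {a, b}" "a \<noteq> b" "y = {c, d}" "c \<noteq> d"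
    using obtain_edge t(2,3) by metis
  moreover from this t(4,6) have "distinct [a, b, c, d, z]" by auto
  ultimately have "({a, b, c, d, z}, {{a, b}, {c, d}}) \<in> copies graph_M (V, E)"
    unfolding mem_copies_M_iff using t(2,3,5) by blast
  moreover from \<open>x = {a, b}\<close> \<open>y = {c, d}\<close> have "M_of_triple t = ({a, b, c, d, z}, {{a, b}, {c, d}})"
    using t(1) by auto
  ultimately show ?thesis by simp
qed

lemma card_M_of_triple_fibre:
  assumes "C \<in> copies graph_M (V, E)"
  shows "card {t \<in> ordered_M_copies V E. M_of_triple t = C} = 2"
proof -
  obtain a b c d z where C: "distinct [a, b, c, d, z]" "C = ({a, b, c, d, z}, {{a, b}, {c, d}})"
    "{a, b} \<in> E" "{c, d} \<in> E" "z \<in> V"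
    using assms by (cases C) (auto simp: mem_copies_M_iff)
  have "{t \<in> ordered_M_copies V E. M_of_triple t = C} = {(({a, b}, {c, d}), z), (({c, d}, {a, b}), z)}"
  proof (intro equalityI subsetI)
    fix t assume t_mem: "t \<in> {t \<in> ordered_M_copies V E. M_of_triple t = C}"
    obtain x y w where t_eq: "t = ((x, y), w)" by (metis prod.collapse)
    with t_mem have t: "t = ((x, y), w)" "w \<notin> x \<union> y" "insert w (x \<union> y) = {a, b, c, d, z}"
        "{x, y} = {{a, b}, {c, d}}"
      by (auto simp: ordered_M_copies_def C(2))
    then have "(x = {a, b} \<and> y = {c, d}) \<or> (x = {c, d} \<and> y = {a, b})"
      by (auto simp: doubleton_eq_iff)
    moreover from this have "w = z" using t(2,3) C(1) by auto
    ultimately show "t \<in> {(({a, b}, {c, d}), z), (({c, d}, {a, b}), z)}" using t(1) by auto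
  qed (use C in \<open>auto simp: ordered_M_copies_def disjoint_edge_pairs_def insert_commute\<close>)
  moreover have "{a, b} \<noteq> {c, d}" using C(1) by (auto simp: doubleton_eq_iff)
  ultimately show ?thesis by simp
qed

lemma two_card_copies_M:
  "2 * card (copies graph_M (V, E)) = card (disjoint_edge_pairs E) * (card V - 4)"
proof -
  have "(\<Sum>t\<in>ordered_M_copies V E. card {C \<in> copies graph_M (V, E). M_of_triple t = C})
      = 2 * card (copies graph_M (V, E))"
    using finite_ordered_M_copies finite_copies[of graph_M] card_M_of_triple_fibre
    by (intro sum_multicount) auto
  moreover have "{C \<in> copies graph_M (V, E). M_of_triple t = C} = {M_of_triple t}"
    if "t \<in> ordered_M_copies V E" for t
    using M_of_triple_mem_copies[OF that] by auto
  ultimately show ?thesis by (simp add: card_ordered_M_copies)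
qed

lemma card_M_copies_in_M'_copy:
  assumes "C' \<in> copies graph_M' (V, E)"
  shows "card {C \<in> copies graph_M (V, E). spanning_subgraph C C'} = 2"
proof -
  obtain a b c d z where C': "C' = ({a, b, c, d, z}, {{a, b}, {b, c}, {d, z}})" "distinct [a, b, c, d, z]"
    "{a, b} \<in> E" "{b, c} \<in> E" "{d, z} \<in> E"
    using assms by (cases C') (auto simp: mem_copies_M'_iff)
  have "a \<in> V" "c \<in> V" using C'(3,4) edge_subset by auto
  let ?C1 = "({a, b, c, d, z}, {{a, b}, {d, z}})" and ?C2 = "({a, b, c, d, z}, {{b, c}, {d, z}})"
  have "{C \<in> copies graph_M (V, E). spanning_subgraph C C'} = {?C1, ?C2}"
  proof (intro equalityI subsetI)
    fix C assume "C \<in> {C \<in> copies graph_M (V, E). spanning_subgraph C C'}"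
    then obtain p q r s t where C: "C = ({a, b, c, d, z}, {{p, q}, {r, s}})" "distinct [p, q, r, s, t]"
      "{{p, q}, {r, s}} \<subseteq> {{a, b}, {b, c}, {d, z}}"
      by (cases C) (auto simp: mem_copies_M_iff spanning_subgraph_def C'(1))
    then have "{{p, q}, {r, s}} = {{a, b}, {d, z}} \<or> {{p, q}, {r, s}} = {{b, c}, {d, z}}"
      by (intro disjoint_pair_in_three) auto
    then show "C \<in> {?C1, ?C2}" using C(1) by auto
  next
    have "{a, b, c, d, z} = {a, b, d, z, c}" "{a, b, c, d, z} = {b, c, d, z, a}" by auto
    moreover have "distinct [a, b, d, z, c]" "distinct [b, c, d, z, a]" using C'(2) by auto
    ultimately have "?C1 \<in> copies graph_M (V, E)" "?C2 \<in> copies graph_M (V, E)"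
      unfolding mem_copies_M_iff using C'(3-5) \<open>a \<in> V\<close> \<open>c \<in> V\<close> by blast+
    then show "C \<in> {C \<in> copies graph_M (V, E). spanning_subgraph C C'}" if "C \<in> {?C1, ?C2}" for C
      using that by (auto simp: spanning_subgraph_def C'(1))
  qed
  moreover have "?C1 \<noteq> ?C2" using C'(2) by (auto simp: doubleton_eq_iff)
  ultimately show ?thesis by simp
qed

lemma two_card_copies_M':
  "2 * card (copies graph_M' (V, E))
    = (\<Sum>C\<in>copies graph_M (V, E). card {C' \<in> copies graph_M' (V, E). spanning_subgraph C C'})"
  using finite_copies[of graph_M] finite_copies[of graph_M'] card_M_copies_in_M'_copy
  by (intro sum_multicount[symmetric]) auto

lemma M'_copy_of_M_copy:
  assumes "distinct [a, b, c, d, z]" "{a, b} \<in> E" "{c, d} \<in> E" "x \<in> neighbours E z \<inter> {a, b, c, d}"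
  shows "({a, b, c, d, z}, {{a, b}, {c, d}, {z, x}}) \<in> copies graph_M' (V, E)"
proof -
  have path: "({a, b, c, d, z}, {{a, b}, {c, d}, {z, b}}) \<in> copies graph_M' (V, E)"
    if "distinct [a, b, c, d, z]" "{a, b} \<in> E" "{c, d} \<in> E" "{z, b} \<in> E" for a b c d
  proof -
    have "{a, b, c, d, z} = {a, b, z, c, d}" "{{a, b}, {c, d}, {z, b}} = {{a, b}, {b, z}, {c, d}}"
      by auto
    moreover have "distinct [a, b, z, c, d]" "{b, z} \<in> E" using that by (auto simp: insert_commute)
    ultimately show ?thesis unfolding mem_copies_M'_iff using that by blast
  qed
  from assms(4) have zx: "{z, x} \<in> E" and "x \<in> {a, b, c, d}" by (auto simp: neighbours_def)
  then consider "x = a" | "x = b" | "x = c" | "x = d" by auto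
  then show ?thesis
  proof cases
    case 1
    have "({b, a, c, d, z}, {{b, a}, {c, d}, {z, a}}) \<in> copies graph_M' (V, E)"
      using assms(1-3) zx 1 by (intro path) (auto simp: insert_commute)
    moreover have "{b, a, c, d, z} = {a, b, c, d, z}" "{{b, a}, {c, d}, {z, a}} = {{a, b}, {c, d}, {z, x}}"
      using 1 by auto
    ultimately show ?thesis by simp
  next
    case 2
    then show ?thesis using path[of a b c d] assms(1-3) zx by simp
  next
    case 3
    have "({d, c, a, b, z}, {{d, c}, {a, b}, {z, c}}) \<in> copies graph_M' (V, E)"
      using assms(1-3) zx 3 by (intro path) (auto simp: insert_commute)
    moreover have "{d, c, a, b, z} = {a, b, c, d, z}" "{{d, c}, {a, b}, {z, c}} = {{a, b}, {c, d}, {z, x}}"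
      using 3 by auto
    ultimately show ?thesis by simp
  next
    case 4
    have "({c, d, a, b, z}, {{c, d}, {a, b}, {z, d}}) \<in> copies graph_M' (V, E)"
      using assms(1-3) zx 4 by (intro path) auto
    moreover have "{c, d, a, b, z} = {a, b, c, d, z}" "{{c, d}, {a, b}, {z, d}} = {{a, b}, {c, d}, {z, x}}"
      using 4 by auto
    ultimately show ?thesis by simp
  qed
qed

lemma M'_copy_containing_M_copy:
  assumes "distinct [a, b, c, d, z]" "C' \<in> copies graph_M' (V, E)"
    and "spanning_subgraph ({a, b, c, d, z}, {{a, b}, {c, d}}) C'"
  obtains x where "x \<in> neighbours E z \<inter> {a, b, c, d}"
    and "C' = ({a, b, c, d, z}, {{a, b}, {c, d}, {z, x}})"
proof -
  obtain p q r s t where C': "C' = ({a, b, c, d, z}, {{p, q}, {q, r}, {s, t}})"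
    "distinct [p, q, r, s, t]" "{p, q, r, s, t} = {a, b, c, d, z}"
    "{{p, q}, {q, r}, {s, t}} \<subseteq> E" "{{a, b}, {c, d}} \<subseteq> {{p, q}, {q, r}, {s, t}}"
    using assms(2,3) by (cases C') (auto simp: mem_copies_M'_iff spanning_subgraph_def)
  have "z \<in> {p, q} \<or> z \<in> {q, r} \<or> z \<in> {s, t}" using C'(3) by blast
  then obtain f where f: "f \<in> {{p, q}, {q, r}, {s, t}}" "z \<in> f" by blast
  then have "f \<in> E" using C'(4) by blast
  then obtain u v where "f = {u, v}" "u \<noteq> v" by (rule obtain_edge)
  define x where "x = (if z = u then v else u)"
  have x: "f = {z, x}" "x \<noteq> z" using \<open>f = {u, v}\<close> \<open>u \<noteq> v\<close> f(2) by (auto simp: x_def)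
  have "x \<in> {p, q, r, s, t}" using f(1) x(1) by blast
  then have "x \<in> neighbours E z \<inter> {a, b, c, d}"
    using C'(3) x \<open>f \<in> E\<close> by (auto simp: neighbours_def)
  moreover have "{{a, b}, {c, d}, f} = {{p, q}, {q, r}, {s, t}}"
  proof (rule card_subset_eq)
    have "card {{p, q}, {q, r}, {s, t}} = 3" using C'(2) by (auto simp: doubleton_eq_iff)
    moreover have "card {{a, b}, {c, d}, f} = 3" using assms(1) x by (auto simp: doubleton_eq_iff)
    ultimately show "card {{a, b}, {c, d}, f} = card {{p, q}, {q, r}, {s, t}}" by simp
  qed (use C'(5) f(1) in auto)
  ultimately have "C' = ({a, b, c, d, z}, {{a, b}, {c, d}, {z, x}})" using C'(1) x(1) by simp
  with \<open>x \<in> neighbours E z \<inter> {a, b, c, d}\<close> show ?thesis by (rule that)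
qed

lemma card_M'_copies_over_M_copy:
  assumes "distinct [a, b, c, d, z]" "{a, b} \<in> E" "{c, d} \<in> E"
  shows "card {C' \<in> copies graph_M' (V, E). spanning_subgraph ({a, b, c, d, z}, {{a, b}, {c, d}}) C'}
    = card (neighbours E z \<inter> {a, b, c, d})"
proof -
  let ?ext = "\<lambda>x. ({a, b, c, d, z}, {{a, b}, {c, d}, {z, x}})"
  have "{C' \<in> copies graph_M' (V, E). spanning_subgraph ({a, b, c, d, z}, {{a, b}, {c, d}}) C'}
      = ?ext ` (neighbours E z \<inter> {a, b, c, d})"
  proof (intro equalityI subsetI)
    fix C'
    assume "C' \<in> {C' \<in> copies graph_M' (V, E). spanning_subgraph ({a, b, c, d, z}, {{a, b}, {c, d}}) C'}"
    then obtain x where "x \<in> neighbours E z \<inter> {a, b, c, d}" "C' = ?ext x"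
      using M'_copy_containing_M_copy[OF assms(1)] by blast
    then show "C' \<in> ?ext ` (neighbours E z \<inter> {a, b, c, d})" by blast
  next
    fix C' assume "C' \<in> ?ext ` (neighbours E z \<inter> {a, b, c, d})"
    then obtain x where "x \<in> neighbours E z \<inter> {a, b, c, d}" "C' = ?ext x" by blast
    then show "C' \<in> {C' \<in> copies graph_M' (V, E). spanning_subgraph ({a, b, c, d, z}, {{a, b}, {c, d}}) C'}"
      using M'_copy_of_M_copy[OF assms] by (simp add: spanning_subgraph_def)
  qed
  moreover have "inj_on ?ext (neighbours E z \<inter> {a, b, c, d})"
  proof (rule inj_onI)
    fix x y assume x: "x \<in> neighbours E z \<inter> {a, b, c, d}" and "?ext x = ?ext y"
    then have "{{a, b}, {c, d}, {z, x}} = {{a, b}, {c, d}, {z, y}}" by simp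
    moreover have "{z, x} \<in> {{a, b}, {c, d}, {z, x}}" by simp
    ultimately have "{z, x} \<in> {{a, b}, {c, d}, {z, y}}" by simp
    moreover have "z \<notin> {a, b, c, d}" "x \<noteq> z" using assms(1) x by auto
    ultimately show "x = y" by (auto simp: doubleton_eq_iff)
  qed
  ultimately show ?thesis by (simp add: card_image)
qed

end

lemma (in triangle_free_graph) card_copies_M'_le_M:
  "card (copies graph_M' (V, E)) \<le> card (copies graph_M (V, E))"
proof -
  have "card {C' \<in> copies graph_M' (V, E). spanning_subgraph C C'} \<le> 2"
    if C_mem: "C \<in> copies graph_M (V, E)" for C
  proof -
    obtain a b c d z where C: "C = ({a, b, c, d, z}, {{a, b}, {c, d}})" "distinct [a, b, c, d, z]"
      "{a, b} \<in> E" "{c, d} \<in> E"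
      using C_mem by (cases C) (auto simp: mem_copies_M_iff)
    have "neighbours E z \<inter> {a, b, c, d} = (neighbours E z \<inter> {a, b}) \<union> (neighbours E z \<inter> {c, d})"
      by auto
    then have "card {C' \<in> copies graph_M' (V, E). spanning_subgraph C C'}
        = card ((neighbours E z \<inter> {a, b}) \<union> (neighbours E z \<inter> {c, d}))"
      using card_M'_copies_over_M_copy[OF C(2-4)] C(1) by simp
    also have "\<dots> \<le> card (neighbours E z \<inter> {a, b}) + card (neighbours E z \<inter> {c, d})"
      by (rule card_Un_le)
    also have "\<dots> \<le> 2"
      using add_mono[OF card_neighbours_Int_edge_le[OF C(3), of z] card_neighbours_Int_edge_le[OF C(4), of z]]
      by simp
    finally show ?thesis .
  qed
  then have "2 * card (copies graph_M' (V, E)) \<le> (\<Sum>C\<in>copies graph_M (V, E). 2)"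
    unfolding two_card_copies_M' by (rule sum_mono)
  then show ?thesis by simp
qed

lemma card_copies_M'_T2: "card (copies graph_M' (T2 n)) = card (copies graph_M (T2 n))"
proof -
  interpret triangle_free_graph "{0..<n}" "snd (T2 n)" by (rule triangle_free_graph_T2)
  have "card {C' \<in> copies graph_M' ({0..<n}, snd (T2 n)). spanning_subgraph C C'} = 2"
    if C_mem: "C \<in> copies graph_M ({0..<n}, snd (T2 n))" for C
  proof -
    obtain a b c d z where C: "C = ({a, b, c, d, z}, {{a, b}, {c, d}})" "distinct [a, b, c, d, z]"
      "{a, b} \<in> snd (T2 n)" "{c, d} \<in> snd (T2 n)" "z < n"
      using C_mem by (cases C) (auto simp: mem_copies_M_iff)
    have "neighbours (snd (T2 n)) z \<inter> {a, b, c, d}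
        = (neighbours (snd (T2 n)) z \<inter> {a, b}) \<union> (neighbours (snd (T2 n)) z \<inter> {c, d})"
      by auto
    then have "card {C' \<in> copies graph_M' ({0..<n}, snd (T2 n)). spanning_subgraph C C'}
        = card ((neighbours (snd (T2 n)) z \<inter> {a, b}) \<union> (neighbours (snd (T2 n)) z \<inter> {c, d}))"
      using card_M'_copies_over_M_copy[OF C(2-4)] C(1) by simp
    also have "\<dots> = card (neighbours (snd (T2 n)) z \<inter> {a, b}) + card (neighbours (snd (T2 n)) z \<inter> {c, d})"
      using C(2) by (intro card_Un_disjoint) auto
    also have "\<dots> = 2"
      using card_neighbours_Int_T2_edge C(3-5) by simp
    finally show ?thesis .
  qed
  then have "2 * card (copies graph_M' ({0..<n}, snd (T2 n))) = 2 * card (copies graph_M ({0..<n}, snd (T2 n)))"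
    unfolding two_card_copies_M' by simp
  then show ?thesis by (subst (1 2) T2_eq) simp
qed

section \<open>Extremality of T_2(n)\<close>

lemma count_copies_M_le_T2:
  assumes "simple_graph G" "triangle_free G" "fst G = {0..<n}"
  shows "count_copies graph_M G \<le> count_copies graph_M (T2 n)"
proof -
  interpret G: triangle_free_graph "{0..<n}" "snd G"
    using assms triangle_free_graph_iff by metis
  interpret T: triangle_free_graph "{0..<n}" "snd (T2 n)" by (rule triangle_free_graph_T2)
  have G_eq: "G = ({0..<n}, snd G)" using assms(3) by (metis prod.collapse)
  have "2 * count_copies graph_M G = card (disjoint_edge_pairs (snd G)) * (n - 4)"
    using G.two_card_copies_M by (subst G_eq) (simp add: count_copies_eq_card)
  also have "\<dots> \<le> card (disjoint_edge_pairs (snd (T2 n))) * (n - 4)"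
    using G.card_disjoint_edge_pairs_le_T2 by simp
  also have "\<dots> = 2 * count_copies graph_M (T2 n)"
    using T.two_card_copies_M by (subst T2_eq) (simp add: count_copies_eq_card)
  finally show ?thesis by simp
qed

lemma count_copies_M'_le_M:
  assumes "simple_graph G" "triangle_free G"
  shows "count_copies graph_M' G \<le> count_copies graph_M G"
proof -
  interpret triangle_free_graph "fst G" "snd G"
    using assms triangle_free_graph_iff by metis
  show ?thesis using card_copies_M'_le_M by (simp add: count_copies_eq_card)
qed

lemma ex_tf_eqI:
  assumes "simple_graph G\<^sub>0" "fst G\<^sub>0 = {0..<n}" "triangle_free G\<^sub>0"
    and "\<And>G :: nat graph. simple_graph G \<Longrightarrow> fst G = {0..<n} \<Longrightarrow> triangle_free G
      \<Longrightarrow> count_copies H G \<le> count_copies H G\<^sub>0"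
  shows "ex_tf n H = count_copies H G\<^sub>0"
proof -
  let ?A = "{count_copies H G | G :: nat graph. simple_graph G \<and> fst G = {0..<n} \<and> triangle_free G}"
  have "finite ?A" by (rule finite_subset[of _ "{..count_copies H G\<^sub>0}"]) (use assms(4) in auto)
  moreover have "count_copies H G\<^sub>0 \<in> ?A" using assms(1-3) by blast
  ultimately show ?thesis unfolding ex_tf_def using assms(4) by (intro Max_eqI) auto
qed

theorem mainTheorem11:
  fixes n :: nat
  shows "ex_tf n graph_M = count_copies graph_M (T2 n)
       \<and> ex_tf n graph_M' = count_copies graph_M' (T2 n)"
proof -
  have T2: "simple_graph (T2 n)" "fst (T2 n) = {0..<n}" "triangle_free (T2 n)"
    using triangle_free_graph_T2[of n] triangle_free_graph_iff[of "T2 n"] by (simp_all add: T2_def)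
  have "ex_tf n graph_M = count_copies graph_M (T2 n)"
    using T2 count_copies_M_le_T2 by (intro ex_tf_eqI)
  moreover have "ex_tf n graph_M' = count_copies graph_M' (T2 n)"
  proof (intro ex_tf_eqI T2)
    fix G :: "nat graph"
    assume "simple_graph G" "fst G = {0..<n}" "triangle_free G"
    then have "count_copies graph_M' G \<le> count_copies graph_M (T2 n)"
      by (metis count_copies_M'_le_M count_copies_M_le_T2 order_trans)
    then show "count_copies graph_M' G \<le> count_copies graph_M' (T2 n)"
      using card_copies_M'_T2 by (simp add: count_copies_eq_card)
  qed
  ultimately show ?thesis ..
qed

end
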